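(* Let $n,m,p,N\in\mathbb{N}_+$, $B\in\mathbb{R}^{n\times m}$, $C\in\mathbb{R}^{p\times n}$ of full column rank, $x_0\in\mathbb{R}^n$, $r_1,\dots,r_N\in\mathbb{R}^p$, $r_0:=Cx_0$, $A^{\rm r}\in\mathbb{R}^{n\times n}$, $u^{\rm r}_0,\dots,u^{\rm r}_{N-1}\in\mathbb{R}^m$, $\omega,\omega_0,\dots,\omega_{N-1}\ge0$, and $\mathcal{S}_{\rm M2}\subseteq\mathbb{R}^{n\times n}\times\mathbb{R}^{m\times N}$. Problem (MOPUL2) is: minimize $\|A-A^{\rm r}\|_F$ over $A\in\mathbb{R}^{n\times n}$, $U=(u_0,\dots,u_{N-1})\in\mathbb{R}^{m\times N}$ subject to $x_t=Ax_{t-1}+Bu_{t-1}$ ($t=1,\dots,N$), $y_t=Cx_t$ ($t=0,\dots,N$), $\sum_{t=1}^N\|y_t-r_t\|_2\le\omega$, $\|u_t-u^{\rm r}_t\|_2\le\omega_t$ ($t=0,\dots,N-1$), and $(A,U)\in\mathcal{S}_{\rm M2}$. Let $\beta>0$, $\tilde\omega:=\omega/\big(\sum_{i=0}^{N-1}\beta^i\big)$, and let problem (AMOPUL2) be: minimize $\|A-A^{\rm r}\|_F$ over $(A,U)$ subject to $\sum_{t=1}^N\|CAC^{\dagger}r_{t-1}+CBu_{t-1}-r_t\|_2\le\tilde\omega$, $\|u_t-u^{\rm r}_t\|_2\le\omega_t$ ($t=0,\dots,N-1$), and $(A,U)\in\mathcal{S}_{\rm M2}$. If $\|CA^{\rm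 a}C^{\dagger}\|_2\le\beta$ for every feasible $A^{\rm a}$ of (AMOPUL2), then every feasible solution of (AMOPUL2) is feasible for (MOPUL2), and the optimal objective value of (AMOPUL2) is an upper bound for the optimal objective value of (MOPUL2).
   Context: $C^{\dagger}$ is the Moore–Penrose inverse of $C$; $\|\cdot\|_F$ is the Frobenius norm; $\|\cdot\|_2$ is the Euclidean norm for vectors and the spectral norm for matrices. In the paper $\mathcal{S}_{\rm M2}$ is assumed SD representable, though this is not used in the claim. *)

theory Defs
  imports "HOL-Analysis.Analysis"
begin

definition mp_pinv :: "real^'n^'p \<Rightarrow> real^'p^'n" where
  "mp_pinv C = (THE X. C ** X ** C = C \<and> X ** C ** X = X \<and>
      transpose (C ** X) = C ** X \<and> transpose (X ** C) = X ** C)"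

definition frob_norm :: "real^'n^'m \<Rightarrow> real" where
  "frob_norm M = sqrt (\<Sum>i\<in>UNIV. \<Sum>j\<in>UNIV. (M $ i $ j)^2)"

definition spec_norm :: "real^'n^'m \<Rightarrow> real" where
  "spec_norm M = onorm (\<lambda>x. M *v x)"

fun state :: "real^'n^'n \<Rightarrow> real^'m^'n \<Rightarrow> (real^'m) list \<Rightarrow> real^'n \<Rightarrow> nat \<Rightarrow> real^'n" where
  "state A B U x0 0 = x0"
| "state A B U x0 (Suc t) = A *v state A B U x0 t + B *v (U ! t)"

definition mopul2_feasible ::
  "nat \<Rightarrow> real^'m^'n \<Rightarrow> real^'n^'p \<Rightarrow> real^'n \<Rightarrow> (nat \<Rightarrow> real^'p) \<Rightarrow> (nat \<Rightarrow> real^'m)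
   \<Rightarrow> real \<Rightarrow> (nat \<Rightarrow> real) \<Rightarrow> ((real^'n^'n) \<times> (real^'m) list) set
   \<Rightarrow> ((real^'n^'n) \<times> (real^'m) list) set" where
  "mopul2_feasible N B C x0 r ur \<omega> \<omega>s S =
     {(A, U). length U = N \<and>
        (\<Sum>t=1..N. norm (C *v state A B U x0 t - r t)) \<le> \<omega> \<and>
        (\<forall>t<N. norm (U ! t - ur t) \<le> \<omega>s t) \<and> (A, U) \<in> S}"

definition amopul2_feasible ::
  "nat \<Rightarrow> real^'m^'n \<Rightarrow> real^'n^'p \<Rightarrow> (nat \<Rightarrow> real^'p) \<Rightarrow> (nat \<Rightarrow> real^'m)
   \<Rightarrow> real \<Rightarrow> real \<Rightarrow> (nat \<Rightarrow> real) \<Rightarrow> ((real^'n^'n) \<times> (real^'m) list) set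
   \<Rightarrow> ((real^'n^'n) \<times> (real^'m) list) set" where
  "amopul2_feasible N B C r ur \<beta> \<omega> \<omega>s S =
     {(A, U). length U = N \<and>
        (\<Sum>t=1..N. norm (((C ** A) ** mp_pinv C) *v r (t - 1) + C *v (B *v (U ! (t - 1))) - r t))
           \<le> \<omega> / (\<Sum>i<N. \<beta> ^ i) \<and>
        (\<forall>t<N. norm (U ! t - ur t) \<le> \<omega>s t) \<and> (A, U) \<in> S}"

text \<open>Optimal value: infimum of the objective over the feasible set (+\<infinity> if infeasible).\<close>
definition opt_val :: "real^'n^'n \<Rightarrow> ((real^'n^'n) \<times> 'u) set \<Rightarrow> ereal" where
  "opt_val Ar F = (INF (A, U)\<in>F. ereal (frob_norm (A - Ar)))"

end

(* Full column rank gives C^+ C = I, so M = C A C^+ satisfies M C = C A, and the output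
   tracking error e_t = C x_t - r_t obeys e_t = M e_(t-1) + d_t with e_0 = 0, where d_t is the
   residual constrained in (AMOPUL2). With ||M||_2 <= beta, unrolling the recursion
   ||e_t|| <= beta ||e_(t-1)|| + ||d_t|| gives sum ||e_t|| <= (sum_(i<N) beta^i) sum ||d_t|| <= omega.
   So (AMOPUL2) has the smaller feasible set, hence the larger optimal value. *)
theory Submission imports Defs begin

definition penrose_inverse :: "real^'n^'p \<Rightarrow> real^'p^'n \<Rightarrow> bool" where
  "penrose_inverse C X \<longleftrightarrow> C ** X ** C = C \<and> X ** C ** X = X \<and>
      transpose (C ** X) = C ** X \<and> transpose (X ** C) = X ** C"

lemma penrose_inverse_unique:
  assumes X: "penrose_inverse C X" and Y: "penrose_inverse C Y"
  shows "X = Y"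
proof -
  have "X = X ** transpose (C ** X)"
    using X by (simp add: penrose_inverse_def matrix_mul_assoc)
  also have "\<dots> = X ** transpose X ** transpose (C ** Y ** C)"
    using Y by (simp add: penrose_inverse_def matrix_transpose_mul matrix_mul_assoc)
  also have "\<dots> = X ** transpose (C ** X) ** transpose (C ** Y)"
    by (simp add: matrix_transpose_mul matrix_mul_assoc)
  also have "\<dots> = X ** C ** Y"
    using X Y by (simp add: penrose_inverse_def matrix_mul_assoc)
  finally have XCY: "X = X ** C ** Y" .
  have "Y = transpose (Y ** C) ** Y"
    using Y by (simp add: penrose_inverse_def)
  also have "\<dots> = transpose (C ** X ** C) ** transpose Y ** Y"
    using X by (simp add: penrose_inverse_def matrix_transpose_mul matrix_mul_assoc)
  also have "\<dots> = transpose (X ** C) ** transpose (Y ** C) ** Y"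
    by (simp add: matrix_transpose_mul matrix_mul_assoc)
  also have "\<dots> = X ** C ** Y ** C ** Y"
    using X Y by (simp add: penrose_inverse_def matrix_mul_assoc)
  also have "\<dots> = X ** C ** Y"
    using Y by (metis penrose_inverse_def matrix_mul_assoc)
  finally show ?thesis using XCY by simp
qed

lemma mp_pinv_eqI: "penrose_inverse C X \<Longrightarrow> mp_pinv C = X"
  unfolding mp_pinv_def penrose_inverse_def[symmetric]
  using penrose_inverse_unique by blast

lemma gram_matrix_left_invertible:
  fixes C :: "real^'n^'p"
  assumes "inj ((*v) C)"
  shows "\<exists>Gi. Gi ** (transpose C ** C) = mat 1"
  unfolding matrix_left_invertible_ker
proof (intro allI impI)
  fix x assume "(transpose C ** C) *v x = 0"
  then have "inner (C *v x) (C *v x) = 0"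
    using dot_lmul_matrix[of "C *v x" C x] by (simp add: matrix_vector_mul_assoc[symmetric])
  then have "C *v x = C *v 0" by simp
  then show "x = 0" using assms by (rule injD[rotated])
qed

lemma penrose_inverseI_left_inverse:
  assumes "X ** C = mat 1" and "transpose (C ** X) = C ** X"
  shows "penrose_inverse C X"
  using assms by (simp add: penrose_inverse_def transpose_mat matrix_mul_assoc[symmetric])

lemma mp_pinv_left_inverse:
  fixes C :: "real^'n^'p"
  assumes "rank C = CARD('n)"
  shows "mp_pinv C ** C = mat 1"
proof -
  define G where "G = transpose C ** C"
  obtain Gi where Gi: "Gi ** G = mat 1"
    using gram_matrix_left_invertible assms full_rank_injective G_def by blast
  have "transpose Gi ** G = mat 1"
    using Gi matrix_left_right_inverse[of G Gi]
    by (metis G_def matrix_transpose_mul transpose_mat transpose_transpose)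
  \<comment> \<open>both Gi and its transpose are left inverses of the symmetric matrix G\<close>
  then have Gi_sym: "transpose Gi = Gi"
    using Gi matrix_left_right_inverse by (metis matrix_mul_assoc matrix_mul_lid matrix_mul_rid)
  define X where "X = Gi ** transpose C"
  have "X ** C = mat 1" using Gi by (simp add: X_def G_def matrix_mul_assoc)
  moreover have "transpose (C ** X) = C ** X"
    by (simp add: X_def matrix_transpose_mul Gi_sym matrix_mul_assoc)
  ultimately show ?thesis
    using mp_pinv_eqI penrose_inverseI_left_inverse by metis
qed

lemma sum_le_geometric_sum_mult_sum:
  fixes a D :: "nat \<Rightarrow> real"
  assumes a0: "a 0 = 0" and step: "\<And>t. a (Suc t) \<le> \<beta> * a t + D (Suc t)"
    and D_nonneg: "\<And>t. D t \<ge> 0" and "\<beta> \<ge> 0"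
  shows "(\<Sum>t=1..n. a t) \<le> (\<Sum>i<n. \<beta> ^ i) * (\<Sum>t=1..n. D t)"
proof (induction n)
  case 0
  show ?case by simp
next
  case (Suc n)
  let ?T = "\<lambda>n. \<Sum>t=1..n. D t"
  have "(\<Sum>t=1..Suc n. a t) = (\<Sum>t=0..n. a (Suc t))"
    by (simp only: One_nat_def sum.shift_bounds_cl_Suc_ivl)
  also have "\<dots> \<le> (\<Sum>t=0..n. \<beta> * a t + D (Suc t))"
    by (intro sum_mono step)
  also have "\<dots> = \<beta> * (\<Sum>t=1..n. a t) + ?T (Suc n)"
    by (simp add: sum.distrib sum_distrib_left sum.atLeast_Suc_atMost a0
        sum.shift_bounds_cl_Suc_ivl[symmetric])
  also have "\<dots> \<le> \<beta> * ((\<Sum>i<n. \<beta> ^ i) * ?T n) + ?T (Suc n)"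
    using Suc.IH \<open>\<beta> \<ge> 0\<close> by (intro add_right_mono mult_left_mono)
  also have "\<dots> \<le> \<beta> * ((\<Sum>i<n. \<beta> ^ i) * ?T (Suc n)) + ?T (Suc n)"
    using D_nonneg \<open>\<beta> \<ge> 0\<close>
    by (intro add_right_mono mult_left_mono) (auto simp: sum_nonneg)
  also have "\<dots> = (1 + \<beta> * (\<Sum>i<n. \<beta> ^ i)) * ?T (Suc n)"
    by (simp add: algebra_simps)
  also have "1 + \<beta> * (\<Sum>i<n. \<beta> ^ i) = (\<Sum>i<Suc n. \<beta> ^ i)"
    by (simp add: sum.lessThan_Suc_shift sum_distrib_left del: sum.lessThan_Suc)
  finally show ?case .
qed

lemma tracking_error_step:
  assumes "M ** C = C ** A"
  shows "C *v state A B U x0 (Suc t) - r (Suc t)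
       = M *v (C *v state A B U x0 t - r t) + (M *v r t + C *v (B *v (U ! t)) - r (Suc t))"
proof -
  have "M *v (C *v state A B U x0 t) = C *v (A *v state A B U x0 t)"
    using assms by (simp add: matrix_vector_mul_assoc)
  then show ?thesis
    by (simp add: matrix_vector_mult_diff_distrib matrix_vector_right_distrib algebra_simps)
qed

lemma norm_le_spec_norm_mult: "norm (M *v x) \<le> spec_norm M * norm x"
  unfolding spec_norm_def by (rule onorm) simp

lemma spec_norm_nonneg: "spec_norm M \<ge> 0"
  unfolding spec_norm_def by (rule onorm_pos_le) simp

lemma tracking_error_sum_le:
  assumes "M ** C = C ** A" and "spec_norm M \<le> \<beta>" and "r 0 = C *v x0"
  shows "(\<Sum>t=1..n. norm (C *v state A B U x0 t - r t))
       \<le> (\<Sum>i<n. \<beta> ^ i) * (\<Sum>t=1..n. norm (M *v r (t - 1) + C *v (B *v (U ! (t - 1))) - r t))"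
proof (rule sum_le_geometric_sum_mult_sum)
  fix t
  let ?e = "C *v state A B U x0 t - r t"
  have "norm (C *v state A B U x0 (Suc t) - r (Suc t))
      \<le> norm (M *v ?e) + norm (M *v r t + C *v (B *v (U ! t)) - r (Suc t))"
    unfolding tracking_error_step[OF assms(1)] by (rule norm_triangle_ineq)
  also have "norm (M *v ?e) \<le> spec_norm M * norm ?e"
    by (rule norm_le_spec_norm_mult)
  also have "\<dots> \<le> \<beta> * norm ?e"
    using assms(2) by (rule mult_right_mono) simp
  finally show "norm (C *v state A B U x0 (Suc t) - r (Suc t))
      \<le> \<beta> * norm ?e + norm (M *v r (Suc t - 1) + C *v (B *v (U ! (Suc t - 1))) - r (Suc t))"
    by simp
next
  show "norm (C *v state A B U x0 0 - r 0) = 0" using assms(3) by simp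
next
  show "\<beta> \<ge> 0" using spec_norm_nonneg assms(2) by (rule order_trans)
qed simp

lemma one_le_geometric_sum:
  fixes \<beta> :: real
  assumes "N \<ge> 1" and "\<beta> \<ge> 0"
  shows "1 \<le> (\<Sum>i<N. \<beta> ^ i)"
proof -
  obtain k where "N = Suc k" using assms(1) by (cases N) auto
  then show ?thesis
    using assms(2) by (simp add: sum.lessThan_Suc_shift sum_nonneg del: sum.lessThan_Suc)
qed

lemma amopul2_feasible_imp_mopul2_feasible:
  fixes C :: "real^'n^'p"
  assumes feasible: "(A, U) \<in> amopul2_feasible N B C r ur \<beta> \<omega> \<omega>s S"
    and "N \<ge> 1" and "rank C = CARD('n)" and "r 0 = C *v x0"
    and gain: "spec_norm ((C ** A) ** mp_pinv C) \<le> \<beta>"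
  shows "(A, U) \<in> mopul2_feasible N B C x0 r ur \<omega> \<omega>s S"
proof -
  let ?M = "(C ** A) ** mp_pinv C"
  let ?G = "\<Sum>i<N. \<beta> ^ i"
  let ?T = "\<Sum>t=1..N. norm (?M *v r (t - 1) + C *v (B *v (U ! (t - 1))) - r t)"
  have "?M ** C = C ** A"
    using mp_pinv_left_inverse[OF \<open>rank C = CARD('n)\<close>] by (simp add: matrix_mul_assoc[symmetric])
  then have "(\<Sum>t=1..N. norm (C *v state A B U x0 t - r t)) \<le> ?G * ?T"
    using gain \<open>r 0 = C *v x0\<close> by (rule tracking_error_sum_le)
  also have "?G * ?T \<le> \<omega>"
  proof -
    have "?G > 0"
      using one_le_geometric_sum \<open>N \<ge> 1\<close> order_trans[OF spec_norm_nonneg gain] by fastforce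
    moreover have "?T \<le> \<omega> / ?G" using feasible by (simp add: amopul2_feasible_def)
    ultimately show ?thesis by (simp add: pos_le_divide_eq mult.commute)
  qed
  finally show ?thesis using feasible by (simp add: amopul2_feasible_def mopul2_feasible_def)
qed

lemma opt_val_antimono: "F \<subseteq> H \<Longrightarrow> opt_val Ar H \<le> opt_val Ar F"
  unfolding opt_val_def by (rule INF_superset_mono) simp_all

theorem theorem7:
  fixes N :: nat
    and B :: "real^'m^'n" and C :: "real^'n^'p" and x0 :: "real^'n"
    and r :: "nat \<Rightarrow> real^'p" and Ar :: "real^'n^'n" and ur :: "nat \<Rightarrow> real^'m"
    and \<omega> \<beta> :: real and \<omega>s :: "nat \<Rightarrow> real"
    and S :: "((real^'n^'n) \<times> (real^'m) list) set"
  assumes "N \<ge> 1"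
    and "rank C = CARD('n)"
    and "r 0 = C *v x0"
    and "\<omega> \<ge> 0" and "\<forall>t<N. \<omega>s t \<ge> 0"
    and "\<beta> > 0"
    and "\<forall>Aa U. (Aa, U) \<in> amopul2_feasible N B C r ur \<beta> \<omega> \<omega>s S
              \<longrightarrow> spec_norm ((C ** Aa) ** mp_pinv C) \<le> \<beta>"
  shows "amopul2_feasible N B C r ur \<beta> \<omega> \<omega>s S \<subseteq> mopul2_feasible N B C x0 r ur \<omega> \<omega>s S
       \<and> opt_val Ar (mopul2_feasible N B C x0 r ur \<omega> \<omega>s S)
           \<le> opt_val Ar (amopul2_feasible N B C r ur \<beta> \<omega> \<omega>s S)"
proof -
  have subset: "amopul2_feasible N B C r ur \<beta> \<omega> \<omega>s S \<subseteq> mopul2_feasible N B C x0 r ur \<omega> \<omega>s S"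
  proof (rule subrelI)
    fix A U
    assume "(A, U) \<in> amopul2_feasible N B C r ur \<beta> \<omega> \<omega>s S"
    with assms(1-3,7) show "(A, U) \<in> mopul2_feasible N B C x0 r ur \<omega> \<omega>s S"
      by (blast intro: amopul2_feasible_imp_mopul2_feasible)
  qed
  then show ?thesis using opt_val_antimono by blast
qed

end
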